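(* Let $n\geq 1$, $B^n:=\{(x_1,\dots,x_n)\in\mathbb{R}^n: 1\geq x_1\geq\dots\geq x_n\geq 0\}$ and let $T\colon B^n\to B^n$ be the subtractive Selmer map defined below. For $j\in\{0,\dots,n\}$ put $B(j):=\{x\in B^n: i(1,x_1,\dots,x_n)=j\}$. Then the sets $B(0),\dots,B(n)$ form a partition of $B^n$ and the restriction of $T$ to each $B(j)$ is injective; hence $(B^n,T)$ is a fibred system with digit set $\{0,\dots,n\}$.
   Context: Let $\Delta^{n+1}:=\{b=(b_0,\dots,b_n): b_0\geq b_1\geq\dots\geq b_n\geq 0\}$. For $b\in\Delta^{n+1}$ let $i(b)$ be the smallest index $j\in\{0,\dots,n\}$ with $b_0-b_n\geq b_{j+1}$ (convention $b_{n+1}:=0$), and define $\pi\sigma b:=(b_1,\dots,b_{i},\,b_0-b_n,\,b_{i+1},\dots,b_n)$ with $i=i(b)$ (for $i=0$ this is $(b_0-b_n,b_1,\dots,b_n)$, for $i=n$ it is $(b_1,\dots,b_n,b_0-b_n)$); then $\pi\sigma b\in\Delta^{n+1}$. Let $p(b_0,\dots,b_n)=(b_1/b_0,\dots,b_n/b_0)$. The map $T$ is $T(x):=p(\pi\sigma(1,x_1,\dots,x_n))$. A fibred system is a pair $(B,T)$, $T\colon B\to B$, with a finite or countable digit set $I$ and a map $k\colon B\to I$ such that the sets $k^{-1}\{i\}$ partition $B$ and $T$ is injective on each of them. *)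

theory Defs
  imports Complex_Main "HOL-Library.Countable_Set"
begin

text \<open>Vectors are lists: b = [b_0,...,b_n] has length n+1; x = [x_1,...,x_n] has
  length n, so x_k is x ! (k-1).\<close>

definition bcomp :: "real list \<Rightarrow> nat \<Rightarrow> real" where
  "bcomp b k = (if k < length b then b ! k else 0)"

definition sel_idx :: "real list \<Rightarrow> nat" where
  "sel_idx b = (LEAST j. j \<le> length b - 1 \<and> b ! 0 - b ! (length b - 1) \<ge> bcomp b (Suc j))"

definition pisigma :: "real list \<Rightarrow> real list" where
  "pisigma b = (let i = sel_idx b; c = b ! 0 - b ! (length b - 1)
                in take i (tl b) @ [c] @ drop i (tl b))"

definition proj :: "real list \<Rightarrow> real list" where
  "proj b = map (\<lambda>y. y / b ! 0) (tl b)"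

definition selmerT :: "real list \<Rightarrow> real list" where
  "selmerT x = proj (pisigma (1 # x))"

definition Bn :: "nat \<Rightarrow> real list set" where
  "Bn n = {x. length x = n \<and> (0 < n \<longrightarrow> x ! 0 \<le> 1 \<and> 0 \<le> x ! (n - 1))
              \<and> (\<forall>k. Suc k < n \<longrightarrow> x ! (Suc k) \<le> x ! k)}"

definition Bj :: "nat \<Rightarrow> nat \<Rightarrow> real list set" where
  "Bj n j = {x \<in> Bn n. sel_idx (1 # x) = j}"

definition fibred_system :: "'a set \<Rightarrow> ('a \<Rightarrow> 'a) \<Rightarrow> 'b set \<Rightarrow> ('a \<Rightarrow> 'b) \<Rightarrow> bool" where
  "fibred_system B T I k \<longleftrightarrow>
     T ` B \<subseteq> B \<and> countable I \<and> (\<forall>x\<in>B. k x \<in> I) \<and>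
     (\<forall>i\<in>I. {x\<in>B. k x = i} \<noteq> {}) \<and>
     (\<forall>i\<in>I. inj_on T {x\<in>B. k x = i})"

end

theory Submission
  imports Defs
begin

text \<open>For \<open>b = (1, x)\<close> the digit \<open>i(b)\<close> is the number of coordinates of \<open>x\<close>
  exceeding \<open>1 - x\<^sub>n\<close>, so \<open>\<pi>\<sigma>\<close> merely inserts \<open>1 - x\<^sub>n\<close> into the decreasing vector
  \<open>x\<close> at its sorted position; normalising by the (positive) first coordinate lands in
  \<open>B\<^sup>n\<close> again. If \<open>T x = T y\<close> with \<open>x, y\<close> in the same fibre \<open>B(j)\<close>, then \<open>\<pi>\<sigma>(1, y)\<close>
  is a multiple \<open>r\<close> of \<open>\<pi>\<sigma>(1, x)\<close>; deleting the \<open>j\<close>-th coordinate gives \<open>y = r x\<close>,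
  and comparing \<open>j\<close>-th coordinates gives \<open>1 - r x\<^sub>n = r (1 - x\<^sub>n)\<close>, i.e. \<open>r = 1\<close>.\<close>

lemma Bn_iff:
  "x \<in> Bn n \<longleftrightarrow> length x = n \<and> sorted_wrt (\<ge>) x \<and> set x \<subseteq> {0..1}"
proof
  assume x: "x \<in> Bn n"
  then have len: "length x = n" by (simp add: Bn_def)
  have sorted: "sorted_wrt (\<ge>) x"
    using x by (simp add: Bn_def sorted_wrt_iff_nth_Suc_transp transp_def)
  have antimono: "x ! j \<le> x ! i" if "i \<le> j" "j < n" for i j
    using sorted_wrt_nth_less[OF sorted, of i j] that len by (cases "i = j") auto
  have "x ! k \<in> {0..1}" if "k < n" for k
  proof -
    have "x ! (n - 1) \<le> x ! k" "x ! k \<le> x ! 0"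
      using antimono[of k "n - 1"] antimono[of 0 k] that by auto
    then show ?thesis using x that by (auto simp: Bn_def)
  qed
  then have "set x \<subseteq> {0..1}"
    using len by (auto simp: in_set_conv_nth)
  with len sorted show "length x = n \<and> sorted_wrt (\<ge>) x \<and> set x \<subseteq> {0..1}" by blast
next
  assume "length x = n \<and> sorted_wrt (\<ge>) x \<and> set x \<subseteq> {0..1}"
  then have len: "length x = n" and sorted: "sorted_wrt (\<ge>) x" and bounds: "set x \<subseteq> {0..1}"
    by auto
  have "x ! k \<in> {0..1}" if "k < n" for k
    using bounds nth_mem[of k x] that len by blast
  moreover have "x ! Suc k \<le> x ! k" if "Suc k < n" for k
    using sorted_wrt_nth_less[OF sorted, of k "Suc k"] that len by simp
  ultimately show "x \<in> Bn n"
    using len by (simp add: Bn_def)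
qed

lemma Bn_last:
  assumes "x \<in> Bn n" "n \<ge> 1"
  shows "x \<noteq> []" "0 \<le> last x" "last x \<le> 1"
proof -
  show "x \<noteq> []" using assms by (auto simp: Bn_iff)
  then have "last x \<in> set x" by simp
  then show "0 \<le> last x" "last x \<le> 1" using assms by (auto simp: Bn_iff)
qed

text \<open>The coordinate \<open>b\<^sub>0 - b\<^sub>n\<close> inserted by \<open>\<pi>\<sigma>\<close> when \<open>b = (1, x)\<close>.\<close>
definition pivot :: "real list \<Rightarrow> real" where
  "pivot x = 1 - last x"

lemma sel_idx_Cons_one:
  assumes "x \<noteq> []" "last x \<le> 1"
  shows "sel_idx (1 # x) = length (takeWhile ((<) (pivot x)) x)"
proof -
  let ?L = "length (takeWhile ((<) (pivot x)) x)"
  have "(1 # x) ! (length (1 # x) - 1) = last x"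
    using assms(1) by (simp add: last_conv_nth)
  then have "sel_idx (1 # x) =
      (LEAST j. j \<le> length x \<and> (if j < length x then x ! j else 0) \<le> pivot x)"
    by (simp add: sel_idx_def bcomp_def pivot_def)
  also have "\<dots> = ?L"
  proof (rule Least_equality)
    have "?L \<le> length x" by (rule length_takeWhile_le)
    moreover have "x ! ?L \<le> pivot x" if "?L < length x"
      using nth_length_takeWhile[OF that] by simp
    moreover have "0 \<le> pivot x" using assms(2) by (simp add: pivot_def)
    ultimately show "?L \<le> length x \<and> (if ?L < length x then x ! ?L else 0) \<le> pivot x"
      by simp
    show "?L \<le> j" if "j \<le> length x \<and> (if j < length x then x ! j else 0) \<le> pivot x" for j
    proof (rule ccontr)
      assume "\<not> ?L \<le> j"
      then have "j < ?L" by simp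
      then have "pivot x < x ! j"
        using set_takeWhileD[OF nth_mem[OF \<open>j < ?L\<close>]] takeWhile_nth[OF \<open>j < ?L\<close>] by simp
      moreover have "j < length x"
        using \<open>j < ?L\<close> length_takeWhile_le[of "(<) (pivot x)" x] by linarith
      ultimately show False using that by simp
    qed
  qed
  finally show ?thesis .
qed

lemma sel_idx_le:
  assumes "x \<in> Bn n" "n \<ge> 1"
  shows "sel_idx (1 # x) \<le> n"
  using assms length_takeWhile_le[of "(<) (pivot x)" x]
  by (simp add: sel_idx_Cons_one[OF Bn_last(1,3)[OF assms]] Bn_iff)

lemma pisigma_Cons_one:
  assumes "x \<noteq> []" "last x \<le> 1"
  shows "pisigma (1 # x) = takeWhile ((<) (pivot x)) x @ pivot x # dropWhile ((<) (pivot x)) x"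
proof -
  have "(1 # x) ! (length (1 # x) - 1) = last x"
    using assms(1) by (simp add: last_conv_nth)
  then show ?thesis
    unfolding pisigma_def sel_idx_Cons_one[OF assms] Let_def
    by (simp add: pivot_def flip: takeWhile_eq_take dropWhile_eq_drop)
qed

lemma dropWhile_less_le:
  fixes c :: "'a :: linorder"
  assumes "sorted_wrt (\<ge>) xs" "b \<in> set (dropWhile ((<) c) xs)"
  shows "b \<le> c"
  using assms by (induction xs) (auto simp: not_less split: if_splits intro: order.trans)

lemma sorted_wrt_ge_le_hd:
  fixes xs :: "'a :: linorder list"
  assumes "sorted_wrt (\<ge>) xs" "b \<in> set xs"
  shows "b \<le> hd xs"
  using assms by (cases xs) auto

lemma set_pisigma_Cons_one:
  assumes "x \<noteq> []" "last x \<le> 1"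
  shows "set (pisigma (1 # x)) = insert (pivot x) (set x)"
proof -
  have "set x = set (takeWhile ((<) (pivot x)) x) \<union> set (dropWhile ((<) (pivot x)) x)"
    by (metis set_append takeWhile_dropWhile_id)
  then show ?thesis by (auto simp: pisigma_Cons_one[OF assms])
qed

lemma length_pisigma_Cons_one:
  assumes "x \<noteq> []" "last x \<le> 1"
  shows "length (pisigma (1 # x)) = Suc (length x)"
  using length_append[of "takeWhile ((<) (pivot x)) x" "dropWhile ((<) (pivot x)) x"]
  by (simp add: pisigma_Cons_one[OF assms])

lemma sorted_pisigma_Cons_one:
  assumes "x \<in> Bn n" "n \<ge> 1"
  shows "sorted_wrt (\<ge>) (pisigma (1 # x))"
proof -
  let ?P = "(<) (pivot x)"
  have "sorted_wrt (\<ge>) (takeWhile ?P x @ dropWhile ?P x)"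
    using assms(1) by (simp add: Bn_iff)
  then have sorted: "sorted_wrt (\<ge>) (takeWhile ?P x)" "sorted_wrt (\<ge>) (dropWhile ?P x)"
    and cross: "\<forall>a\<in>set (takeWhile ?P x). \<forall>b\<in>set (dropWhile ?P x). b \<le> a"
    unfolding sorted_wrt_append by blast+
  have "\<forall>b\<in>set (dropWhile ?P x). b \<le> pivot x"
    using assms(1) dropWhile_less_le by (auto simp: Bn_iff)
  moreover have "\<forall>a\<in>set (takeWhile ?P x). pivot x < a"
    by (auto dest: set_takeWhileD)
  ultimately show ?thesis
    using sorted cross
    by (fastforce simp: pisigma_Cons_one[OF Bn_last(1,3)[OF assms]] sorted_wrt_append)
qed

lemma hd_pisigma_Cons_one_pos:
  assumes "x \<in> Bn n" "n \<ge> 1"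
  shows "0 < hd (pisigma (1 # x))"
proof -
  let ?v = "pisigma (1 # x)"
  note last = Bn_last[OF assms]
  have "pivot x \<in> set ?v" "last x \<in> set ?v"
    using last by (simp_all add: set_pisigma_Cons_one)
  then have "pivot x \<le> hd ?v" "last x \<le> hd ?v"
    using sorted_wrt_ge_le_hd[OF sorted_pisigma_Cons_one[OF assms]] by auto
  then show ?thesis by (simp add: pivot_def)
qed

lemma selmerT_eq:
  assumes "x \<noteq> []" "last x \<le> 1"
  shows "selmerT x = map (\<lambda>a. a / hd (pisigma (1 # x))) (tl (pisigma (1 # x)))"
proof -
  have "pisigma (1 # x) \<noteq> []" using length_pisigma_Cons_one[OF assms] by auto
  then show ?thesis by (simp add: selmerT_def proj_def hd_conv_nth)
qed

lemma selmerT_in_Bn: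
  assumes "x \<in> Bn n" "n \<ge> 1"
  shows "selmerT x \<in> Bn n"
proof -
  let ?v = "pisigma (1 # x)"
  note last = Bn_last[OF assms]
  have pos: "0 < hd ?v" by (rule hd_pisigma_Cons_one_pos[OF assms])
  have tl: "set (tl ?v) \<subseteq> set ?v" by (cases ?v) auto
  then have le_hd: "\<forall>a\<in>set (tl ?v). a \<le> hd ?v"
    using sorted_wrt_ge_le_hd[OF sorted_pisigma_Cons_one[OF assms]] by auto
  have sorted: "sorted_wrt (\<ge>) (tl ?v)"
    using sorted_pisigma_Cons_one[OF assms] by (cases ?v) auto
  have "set ?v \<subseteq> {0..}"
    using set_pisigma_Cons_one[OF last(1,3)] assms(1) last by (auto simp: Bn_iff pivot_def)
  with tl have "set (tl ?v) \<subseteq> {0..}" by blast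
  then have "set (map (\<lambda>a. a / hd ?v) (tl ?v)) \<subseteq> {0..1}"
    using le_hd pos by auto
  moreover have "sorted_wrt (\<ge>) (map (\<lambda>a. a / hd ?v) (tl ?v))"
    unfolding sorted_wrt_map
    using sorted_wrt_mono_rel[OF _ sorted] pos by (simp add: divide_right_mono)
  moreover have "length (tl ?v) = n"
    using length_pisigma_Cons_one[OF last(1,3)] assms(1) by (simp add: Bn_iff)
  ultimately show ?thesis
    by (simp add: Bn_iff selmerT_eq[OF last(1,3)])
qed

lemma proj_eq_imp_scaled:
  fixes u w :: "real list"
  assumes "length u = length w" "u ! 0 \<noteq> 0" "w ! 0 \<noteq> 0" "proj u = proj w"
  shows "w = map ((*) (w ! 0 / u ! 0)) u"
proof (rule nth_equalityI)
  show "length w = length (map ((*) (w ! 0 / u ! 0)) u)" using assms(1) by simp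
  fix k assume k: "k < length w"
  show "w ! k = map ((*) (w ! 0 / u ! 0)) u ! k"
  proof (cases k)
    case 0
    then show ?thesis using k assms(1,2) by simp
  next
    case (Suc m)
    then have "proj u ! m = proj w ! m" using assms(4) by simp
    then have "u ! k / u ! 0 = w ! k / w ! 0"
      using k assms(1) Suc by (simp add: proj_def nth_tl)
    then show ?thesis using k assms(1-3) by (simp add: field_simps)
  qed
qed

lemma pisigma_Cons_one_remove_nth:
  assumes "x \<noteq> []" "last x \<le> 1"
  defines "j \<equiv> sel_idx (1 # x)"
  shows "take j (pisigma (1 # x)) @ drop (Suc j) (pisigma (1 # x)) = x"
    and "pisigma (1 # x) ! j = pivot x"
  by (simp_all add: j_def pisigma_Cons_one[OF assms(1,2)] sel_idx_Cons_one[OF assms(1,2)])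

lemma selmerT_inj_on_Bj:
  assumes "n \<ge> 1"
  shows "inj_on selmerT (Bj n j)"
proof
  fix x y assume "x \<in> Bj n j" "y \<in> Bj n j" and eq: "selmerT x = selmerT y"
  then have x: "x \<in> Bn n" "sel_idx (1 # x) = j" and y: "y \<in> Bn n" "sel_idx (1 # y) = j"
    by (auto simp: Bj_def)
  note lx = Bn_last[OF x(1) assms] and ly = Bn_last[OF y(1) assms]
  define u where "u = pisigma (1 # x)"
  define w where "w = pisigma (1 # y)"
  define r where "r = w ! 0 / u ! 0"
  have len: "length u = Suc n" "length w = Suc n"
    using length_pisigma_Cons_one lx ly x(1) y(1) by (auto simp: u_def w_def Bn_iff)
  have "u \<noteq> []" "w \<noteq> []" using len by auto
  then have "0 < u ! 0" "0 < w ! 0"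
    using hd_pisigma_Cons_one_pos[OF x(1) assms] hd_pisigma_Cons_one_pos[OF y(1) assms]
    by (simp_all add: u_def w_def hd_conv_nth)
  then have w: "w = map ((*) r) u"
    using proj_eq_imp_scaled[of u w] eq len by (simp add: r_def u_def w_def selmerT_def)
  have "y = take j w @ drop (Suc j) w"
    using pisigma_Cons_one_remove_nth(1)[OF ly(1,3)] by (simp add: y(2) w_def)
  also have "\<dots> = map ((*) r) (take j u @ drop (Suc j) u)"
    by (simp add: w take_map drop_map)
  also have "take j u @ drop (Suc j) u = x"
    using pisigma_Cons_one_remove_nth(1)[OF lx(1,3)] by (simp add: x(2) u_def)
  finally have y_scaled: "y = map ((*) r) x" .
  have "j \<le> n" using sel_idx_le[OF x(1) assms] x(2) by simp
  have "pivot y = w ! j"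
    using pisigma_Cons_one_remove_nth(2)[OF ly(1,3)] by (simp add: y(2) w_def)
  also have "\<dots> = r * u ! j"
    using \<open>j \<le> n\<close> len by (simp add: w)
  also have "u ! j = pivot x"
    using pisigma_Cons_one_remove_nth(2)[OF lx(1,3)] by (simp add: x(2) u_def)
  finally have "pivot y = r * pivot x" .
  moreover have "last y = r * last x" using y_scaled lx(1) by (simp add: last_map)
  ultimately have "r = 1" by (simp add: pivot_def algebra_simps)
  then show "x = y" using y_scaled by (simp add: map_idI)
qed

lemma Bj_nonempty:
  assumes "n \<ge> 1" "j \<le> n"
  shows "Bj n j \<noteq> {}"
proof -
  define x :: "real list" where "x = replicate j 1 @ replicate (n - j) (1 / 2)"
  have "sorted_wrt (\<ge>) (replicate k (a :: real))" for k a
    by (induction k) auto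
  then have "x \<in> Bn n"
    by (auto simp: x_def Bn_iff sorted_wrt_append assms(2))
  moreover have "sel_idx (1 # x) = j"
  proof (cases "j = n")
    case True
    then show ?thesis
      using assms(1) by (simp add: x_def sel_idx_Cons_one pivot_def takeWhile_replicate)
  next
    case False
    then have "replicate (n - j) (1 / 2 :: real) = 1 / 2 # replicate (n - j - 1) (1 / 2)"
      using assms(2) by (cases "n - j") auto
    moreover have "length (takeWhile ((<) (1 / 2)) (replicate j 1 @ 1 / 2 # zs)) = j"
      for zs :: "real list"
      by (induction j) auto
    ultimately show ?thesis
      using False by (simp add: x_def sel_idx_Cons_one pivot_def)
  qed
  ultimately show ?thesis by (auto simp: Bj_def)
qed

theorem mainTheorem2:
  fixes n :: nat
  assumes "n \<ge> 1"
  shows "(\<Union>j\<in>{0..n}. Bj n j) = Bn n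
       \<and> (\<forall>j\<in>{0..n}. Bj n j \<noteq> {})
       \<and> (\<forall>j\<in>{0..n}. \<forall>j'\<in>{0..n}. j \<noteq> j' \<longrightarrow> Bj n j \<inter> Bj n j' = {})
       \<and> (\<forall>j\<in>{0..n}. inj_on selmerT (Bj n j))
       \<and> fibred_system (Bn n) selmerT {0..n} (\<lambda>x. sel_idx (1 # x))"
proof -
  have cover: "(\<Union>j\<in>{0..n}. Bj n j) = Bn n"
    using sel_idx_le[OF _ assms] by (auto simp: Bj_def)
  have disjoint: "Bj n j \<inter> Bj n j' = {}" if "j \<noteq> j'" for j j'
    using that by (auto simp: Bj_def)
  have "{x \<in> Bn n. sel_idx (1 # x) = j} = Bj n j" for j
    by (simp add: Bj_def)
  then have "fibred_system (Bn n) selmerT {0..n} (\<lambda>x. sel_idx (1 # x))"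
    using selmerT_in_Bn[OF _ assms] sel_idx_le[OF _ assms]
      Bj_nonempty[OF assms] selmerT_inj_on_Bj[OF assms]
    by (auto simp: fibred_system_def)
  with cover disjoint show ?thesis
    using Bj_nonempty[OF assms] selmerT_inj_on_Bj[OF assms] by auto
qed

end
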